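(* Let $0<q<1$ and let $\alpha,\beta>-1$ be real. For every integer $n\ge 1$ and every $x\in\mathbb C$, \begin{align*} &(1-2xq^{\alpha+1/2}+q^{2\alpha+1})(1+2xq^{\beta+1/2}+q^{2\beta+1})\,P_{n-1}^{(\alpha+1,\beta+1)}(x;q)\\ &=\frac{(1+q^{\alpha+\beta+n})(1+q^{\alpha+\beta+n+1})(1+q^{\alpha+n})(1+q^{\beta+n})(1-q^{\alpha+n})(1-q^{\beta+n})}{(1-q^{2n+\alpha+\beta})(1-q^{2n+\alpha+\beta+1})}\,P_{n-1}^{(\alpha,\beta)}(x;q)\\ &\quad+\frac{(1+q^{\alpha+\beta+n+1})(1+q^{\alpha+\beta+2n+1})(1+q^{n})^2(1-q^{n})(1-q^{\alpha-\beta})}{(1-q^{2n+\alpha+\beta})(1-q^{2n+\alpha+\beta+2})}\,q^{\beta}\,P_{n}^{(\alpha,\beta)}(x;q)\\ &\quad-\frac{(1+q^{n})^2(1+q^{n+1})^2(1-q^{n})(1-q^{n+1})}{(1-q^{2n+\alpha+\beta+1})(1-q^{2n+\alpha+\beta+2})}\,q^{\alpha+\beta}\,P_{n+1}^{(\alpha,\beta)}(x;q). \end{align*}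
   Context: Notation: for $a\in\mathbb C$, $(a;q)_0=1$, $(a;q)_n=\prod_{j=0}^{n-1}(1-aq^j)$, $(a;q)_\infty=\prod_{j\ge0}(1-aq^j)$, and $(a_1,\dots,a_m;q)_n=\prod_{k=1}^m(a_k;q)_n$. The basic hypergeometric series is ${}_r\phi_s(a_1,\dots,a_r;b_1,\dots,b_s;q,z)=\sum_{k\ge0}\frac{(a_1,\dots,a_r;q)_k}{(q,b_1,\dots,b_s;q)_k}\big[(-1)^kq^{k(k-1)/2}\big]^{1+s-r}z^k$. For $x=\cos\theta$, the continuous $q$-Jacobi polynomials in Rahman's normalization are $$P_n^{(\alpha,\beta)}(x;q)=\frac{(q^{\alpha+1},-q^{\beta+1};q)_n}{(q,-q;q)_n}\,{}_4\phi_3\!\left(q^{-n},q^{n+\alpha+\beta+1},q^{1/2}e^{i\theta},q^{1/2}e^{-i\theta};\,q^{\alpha+1},-q^{\beta+1},-q;\,q,q\right),$$ a polynomial of degree $n$ in $x$ (the terminating series depends on $\theta$ only through $x$, so it extends to all $x\in\mathbb C$). *)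

theory Defs
  imports Complex_Main
begin

definition qpoch :: "complex \<Rightarrow> complex \<Rightarrow> nat \<Rightarrow> complex" where
  "qpoch a q n = (\<Prod>j<n. 1 - a * q ^ j)"

text \<open>For x = cos theta:
  (q^(1/2) e^(i theta), q^(1/2) e^(-i theta); q)_k = prod_{j<k} (1 - 2 x q^(j+1/2) + q^(2j+1)).
  This is the polynomial-in-x form used to extend the terminating 4phi3 to all complex x.\<close>
definition qpoch_cos :: "complex \<Rightarrow> real \<Rightarrow> nat \<Rightarrow> complex" where
  "qpoch_cos x q k = (\<Prod>j<k. 1 - 2 * x * of_real (q powr (real j + 1/2)) + of_real (q powr (2 * real j + 1)))"

text \<open>Continuous q-Jacobi polynomials, Rahman's normalization. The 4phi3 has r = 4, s = 3,
  so the factor [(-1)^k q^(k(k-1)/2)]^(1+s-r) equals 1; the series terminates at k = n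
  because (q^(-n);q)_k = 0 for k > n.\<close>
definition qJacobiP :: "real \<Rightarrow> real \<Rightarrow> real \<Rightarrow> nat \<Rightarrow> complex \<Rightarrow> complex" where
  "qJacobiP \<alpha> \<beta> q n x =
     (qpoch (of_real (q powr (\<alpha> + 1))) (of_real q) n * qpoch (- of_real (q powr (\<beta> + 1))) (of_real q) n)
     / (qpoch (of_real q) (of_real q) n * qpoch (- of_real q) (of_real q) n)
     * (\<Sum>k\<le>n.
         qpoch (of_real (q powr (- real n))) (of_real q) k
         * qpoch (of_real (q powr (real n + \<alpha> + \<beta> + 1))) (of_real q) k
         * qpoch_cos x q k
         / (qpoch (of_real q) (of_real q) k
            * qpoch (of_real (q powr (\<alpha> + 1))) (of_real q) k
            * qpoch (- of_real (q powr (\<beta> + 1))) (of_real q) k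
            * qpoch (- of_real q) (of_real q) k)
         * of_real q ^ k)"

end

theory Submission
  imports Defs
begin

text \<open>
  Write a = q^alpha and b = -q^beta. In these parameters Rahman's polynomial P_m(a, b) is
  symmetric in a and b, and raising alpha by one replaces a by a q. In the basis
  phi_k(x) = (q^(1/2) e^(i theta), q^(1/2) e^(-i theta); q)_k, multiplication by
  1 - 2 x a q^(1/2) + a^2 q sends phi_k to a q^(-k) phi_(k+1) + (1 - a q^(k+1)) (1 - a q^(-k)) phi_k,
  and comparing coefficients gives the contiguous relation
    (1 - 2 x a q^(1/2) + a^2 q) P_m(a q, b) = lambda_m P_m(a, b) + mu_m P_(m+1)(a, b).
  Applying it first in b (by symmetry) and then in a writes the left-hand side of the theorem,
  a multiple of P_(n-1)(a q, b q), as a combination of P_(n-1), P_n, P_(n+1) whose coefficients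
  are products of the lambda's and mu's.
\<close>

definition qpoch_real :: "real \<Rightarrow> real \<Rightarrow> nat \<Rightarrow> real" where
  "qpoch_real c q k = (\<Prod>j<k. 1 - c * q ^ j)"

lemma qpoch_real_0 [simp]: "qpoch_real c q 0 = 1"
  by (simp add: qpoch_real_def)

lemma qpoch_real_Suc: "qpoch_real c q (Suc k) = qpoch_real c q k * (1 - c * q ^ k)"
  by (simp add: qpoch_real_def)

lemma qpoch_real_Suc_shift: "qpoch_real c q (Suc k) = (1 - c) * qpoch_real (c * q) q k"
  unfolding qpoch_real_def prod.lessThan_Suc_shift by (simp add: mult.assoc)

lemma qpoch_real_inverse_power_eq_0:
  assumes "q \<noteq> 0" "m < k" shows "qpoch_real (inverse (q ^ m)) q k = 0"
  unfolding qpoch_real_def using assms by (intro prod_zero) (auto intro!: bexI[of _ m])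

lemma qpoch_of_real: "qpoch (of_real c) (of_real q) k = of_real (qpoch_real c q k)"
  by (simp add: qpoch_def qpoch_real_def)

definition qJacobi_norm :: "real \<Rightarrow> real \<Rightarrow> real \<Rightarrow> nat \<Rightarrow> real" where
  "qJacobi_norm a b q m = qpoch_real (a*q) q m * qpoch_real (b*q) q m / (qpoch_real q q m * qpoch_real (-q) q m)"

definition qJacobi_term :: "real \<Rightarrow> real \<Rightarrow> real \<Rightarrow> nat \<Rightarrow> nat \<Rightarrow> real" where
  "qJacobi_term a b q m k = qpoch_real (inverse (q^m)) q k * qpoch_real (-(a*b*q^m*q)) q k * q^k
      / (qpoch_real q q k * qpoch_real (a*q) q k * qpoch_real (b*q) q k * qpoch_real (-q) q k)"

definition qJacobi_coeff :: "real \<Rightarrow> real \<Rightarrow> real \<Rightarrow> nat \<Rightarrow> nat \<Rightarrow> real" where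
  "qJacobi_coeff a b q m k = qJacobi_norm a b q m * qJacobi_term a b q m k"

definition qJacobi_ab :: "real \<Rightarrow> real \<Rightarrow> real \<Rightarrow> nat \<Rightarrow> complex \<Rightarrow> complex" where
  "qJacobi_ab a b q m x = (\<Sum>k\<le>m. of_real (qJacobi_coeff a b q m k) * qpoch_cos x q k)"

lemma qJacobiP_eq_qJacobi_ab:
  assumes "0 < q"
  shows "qJacobiP \<alpha> \<beta> q m x = qJacobi_ab (q powr \<alpha>) (- (q powr \<beta>)) q m x"
proof -
  have "q powr (\<alpha>+1) = q powr \<alpha> * q" "q powr (\<beta>+1) = q powr \<beta> * q"
    "q powr (- real m) = inverse (q^m)"
    "q powr (real m + \<alpha> + \<beta> + 1) = - (q powr \<alpha> * - (q powr \<beta>) * q^m * q)"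
    using assms by (simp_all add: powr_add powr_minus powr_realpow mult_ac)
  then show ?thesis
    unfolding qJacobiP_def qJacobi_ab_def qJacobi_coeff_def qJacobi_term_def qJacobi_norm_def
      sum_distrib_left
    by (simp only: of_real_minus[symmetric] qpoch_of_real) (simp add: mult_ac)
qed

lemma qJacobi_ab_commute: "qJacobi_ab a b q m x = qJacobi_ab b a q m x"
  by (simp add: qJacobi_ab_def qJacobi_coeff_def qJacobi_norm_def qJacobi_term_def mult_ac)

lemma qpoch_cos_Suc:
  assumes "0 < q"
  shows "qpoch_cos x q (Suc k)
    = qpoch_cos x q k * (1 - 2*x*of_real (q^k*sqrt q) + of_real (q^k*q^k*q))"
proof -
  have "q powr (real k + 1/2) = q^k * sqrt q"
    using assms by (simp add: powr_add powr_realpow powr_half_sqrt)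
  moreover have "q powr (2*real k + 1) = q^k*q^k*q"
  proof -
    have "2*real k + 1 = real (k+k+1)"
      by simp
    then show ?thesis
      using assms by (simp only: powr_realpow) (simp add: power_add)
  qed
  ultimately show ?thesis by (simp add: qpoch_cos_def)
qed

lemma qpoch_cos_mult_factor:
  assumes "0 < q"
  shows "(1 - 2*x*of_real (a*sqrt q) + of_real (a^2*q)) * qpoch_cos x q k
     = of_real (a/q^k) * qpoch_cos x q (Suc k) + of_real ((1 - a*q^(k+1)) * (1 - a/q^k)) * qpoch_cos x q k"
proof -
  define K s A where "K = complex_of_real (q^k)" and "s = complex_of_real (sqrt q)"
    and "A = complex_of_real a"
  have "K \<noteq> 0" and q_eq: "complex_of_real q = s*s"
    using assms by (simp_all add: K_def s_def flip: of_real_mult)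
  then have factor: "1 - 2*x*(A*s) + A^2*(s*s)
      = A/K * (1 - 2*x*(K*s) + K*K*(s*s)) + (1 - A*(K*(s*s))) * (1 - A/K)"
    by (simp add: field_simps power2_eq_square)
  have conv: "of_real (a*sqrt q) = A*s" "of_real (a^2*q) = A^2*(s*s)"
    "of_real (q^k*sqrt q) = K*s" "of_real (q^k*q^k*q) = K*K*(s*s)" "of_real (a/q^k) = A/K"
    "of_real ((1 - a*q^(k+1)) * (1 - a/q^k)) = (1 - A*(K*(s*s))) * (1 - A/K)"
    using q_eq by (simp_all add: A_def K_def s_def)
  show ?thesis
    unfolding qpoch_cos_Suc[OF assms] conv factor by (simp add: algebra_simps)
qed

lemma qJacobi_term_Suc:
  "qJacobi_term a b q m (Suc k) = qJacobi_term a b q m k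
     * ((1 - q^k / q^m) * (1 + a*b*q^m*q*q^k) * q
        / ((1 - q*q^k) * (1 - a*q*q^k) * (1 - b*q*q^k) * (1 + q*q^k)))"
  unfolding qJacobi_term_def qpoch_real_Suc
  by (simp add: divide_inverse mult_ac)

lemma qJacobi_term_Suc_shift:
  "qJacobi_term a b q m (Suc k) = qJacobi_term (a*q) b q m k
     * ((1 - q^k / q^m) * (1 + a*b*q^m*q) * q
        / ((1 - q*q^k) * (1 - a*q) * (1 - b*q*q^k) * (1 + q*q^k)))"
proof -
  have "qpoch_real (a*q) q (Suc k) = (1 - a*q) * qpoch_real (a*q*q) q k"
    by (rule qpoch_real_Suc_shift)
  moreover have "qpoch_real (-(a*b*q^m*q)) q (Suc k) = (1 + a*b*q^m*q) * qpoch_real (-(a*q*b*q^m*q)) q k"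
    by (simp add: qpoch_real_Suc_shift mult_ac)
  ultimately show ?thesis
    unfolding qJacobi_term_def by (simp add: qpoch_real_Suc divide_inverse mult_ac)
qed

lemma qJacobi_term_Suc_Suc_shift:
  assumes "q \<noteq> 0"
  shows "qJacobi_term a b q (Suc m) (Suc k) = qJacobi_term (a*q) b q m k
     * ((1 - 1/(q*q^m)) * (1 + a*b*q^m*q*q*q^k) * q
        / ((1 - q*q^k) * (1 - a*q) * (1 - b*q*q^k) * (1 + q*q^k)))"
proof -
  have "qpoch_real (inverse (q ^ Suc m)) q (Suc k) = (1 - 1/(q*q^m)) * qpoch_real (inverse (q^m)) q k"
    unfolding qpoch_real_Suc_shift using assms by (simp add: field_simps)
  moreover have "qpoch_real (a*q) q (Suc k) = (1 - a*q) * qpoch_real (a*q*q) q k"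
    by (rule qpoch_real_Suc_shift)
  ultimately show ?thesis
    unfolding qJacobi_term_def by (simp add: qpoch_real_Suc divide_inverse mult_ac)
qed

lemma qJacobi_norm_shift:
  "(1 - a*q) * qJacobi_norm (a*q) b q m = (1 - a*q*q^m) * qJacobi_norm a b q m"
proof -
  have "(1 - a*q) * qpoch_real (a*q*q) q m = qpoch_real (a*q) q m * (1 - a*q*q^m)"
    by (metis qpoch_real_Suc qpoch_real_Suc_shift)
  then show ?thesis
    unfolding qJacobi_norm_def by (simp add: mult_ac times_divide_eq_right)
qed

lemma qJacobi_norm_Suc:
  "qJacobi_norm a b q (Suc m)
     = qJacobi_norm a b q m * (1 - a*q*q^m) * (1 - b*q*q^m) / ((1 - q*q^m) * (1 + q*q^m))"
  unfolding qJacobi_norm_def by (simp add: qpoch_real_Suc mult_ac)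

definition shift_lambda :: "real \<Rightarrow> real \<Rightarrow> real \<Rightarrow> nat \<Rightarrow> real" where
  "shift_lambda a b q m
     = (1 - a*q*q^m) * (1 + a*q*q^m) * (1 - a*b*q*q^m) / (1 + a*b*q^2*(q^m)^2)"

definition shift_mu :: "real \<Rightarrow> real \<Rightarrow> real \<Rightarrow> nat \<Rightarrow> real" where
  "shift_mu a b q m = - a * (1 - q*q^m) * (1 + q*q^m)^2 / (1 + a*b*q^2*(q^m)^2)"

lemma shift_mu_mult_norm_Suc:
  assumes "1 - q*q^m \<noteq> 0" "1 + q*q^m \<noteq> 0"
  shows "shift_mu a b q m * qJacobi_norm a b q (Suc m)
    = - a * (1 + q*q^m) * (1 - b*q*q^m) / (1 + a*b*q^2*(q^m)^2) * ((1 - a*q*q^m) * qJacobi_norm a b q m)"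
  using assms by (simp add: shift_mu_def qJacobi_norm_Suc power2_eq_square)

lemma abs_mult_less_one:
  fixes c t :: real
  assumes "\<bar>c\<bar> < 1" "\<bar>t\<bar> \<le> 1"
  shows "\<bar>c * t\<bar> < 1"
  using assms mult_strict_mono'[of "\<bar>c\<bar>" 1 "\<bar>t\<bar>" 1] by (cases "\<bar>t\<bar> = 1") (auto simp: abs_mult)

lemma one_minus_mult_neq_0:
  fixes c t :: real
  assumes "\<bar>c\<bar> < 1" "\<bar>t\<bar> \<le> 1"
  shows "1 - c * t \<noteq> 0"
  using abs_mult_less_one[OF assms] by auto

lemma shift_factors_neq_0:
  fixes a b q :: real
  assumes q: "0 < q" "q < 1" and a: "\<bar>a\<bar> * q < 1" and b: "\<bar>b\<bar> * q < 1"
  shows "1 - q*q^k \<noteq> 0" "1 + q*q^k \<noteq> 0" "1 - a*q*q^k \<noteq> 0" "1 - b*q*q^k \<noteq> 0"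
    "1 + a*b*q^2*(q^k)^2 \<noteq> 0"
proof -
  have aq: "\<bar>a*q\<bar> < 1" and bq: "\<bar>b*q\<bar> < 1" and q': "\<bar>q\<bar> < 1" "\<bar>-q\<bar> < 1"
    using q a b by (simp_all add: abs_mult)
  have le1: "\<bar>q^k\<bar> \<le> 1" "\<bar>(q^k)^2\<bar> \<le> 1"
    using q by (simp_all add: power_le_one)
  show "1 - q*q^k \<noteq> 0" "1 + q*q^k \<noteq> 0" "1 - a*q*q^k \<noteq> 0" "1 - b*q*q^k \<noteq> 0"
    using one_minus_mult_neq_0[OF q'(1) le1(1)] one_minus_mult_neq_0[OF q'(2) le1(1)]
      one_minus_mult_neq_0[OF aq le1(1)] one_minus_mult_neq_0[OF bq le1(1)]
    by simp_all
  have "\<bar>-(a*q*(b*q))\<bar> < 1"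
    using abs_mult_less_one[OF aq less_imp_le[OF bq]] by simp
  from one_minus_mult_neq_0[OF this le1(2)] show "1 + a*b*q^2*(q^k)^2 \<noteq> 0"
    by (simp add: power2_eq_square algebra_simps)
qed

lemma shift_coeff_identity:
  fixes a b q N I S \<Delta> :: real
  assumes S: "S = (1-q*I)*(1+q*I)*(1-b*q*I)" and \<Delta>: "\<Delta> = 1+a*b*q^2*N^2"
    and "N \<noteq> 0" "I \<noteq> 0" "S \<noteq> 0" "\<Delta> \<noteq> 0"
  shows "(N-I)*(1+a*b*N*q^2*I)*(q*I-a)/(N*I*S) + a/I
   = ((1+a*q*N)*(1-a*b*q*N)*(N-I)*(1+a*b*N*q)*q - a*(1+q*N)*(1-b*q*N)*(q*N-1)*(1+a*b*N*q^2*I))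
      / (N*S*\<Delta>)"
proof -
  have "(N-I)*(1+a*b*N*q^2*I)*(q*I-a)/(N*I*S) + a/I
      = (\<Delta>*(N-I)*(1+a*b*N*q^2*I)*(q*I-a) + a*N*S*\<Delta>) / (N*I*S*\<Delta>)"
    using assms(3-) by (simp add: field_simps)
  also have "\<Delta>*(N-I)*(1+a*b*N*q^2*I)*(q*I-a) + a*N*S*\<Delta>
      = I*((1+a*q*N)*(1-a*b*q*N)*(N-I)*(1+a*b*N*q)*q - a*(1+q*N)*(1-b*q*N)*(q*N-1)*(1+a*b*N*q^2*I))"
    unfolding S \<Delta> by algebra
  finally show ?thesis using assms(4) by simp
qed

lemma qJacobi_coeff_shift_Suc_lhs:
  fixes a b q N I S :: real and m i :: nat
  assumes N: "N = q^m" and I: "I = q^i" and S: "S = (1-q*I)*(1+q*I)*(1-b*q*I)"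
    and "q \<noteq> 0" "1 - a*q*q*I \<noteq> 0" "S \<noteq> 0"
  shows "qJacobi_coeff (a*q) b q m (Suc i) * ((1 - a*q^(Suc i+1)) * (1 - a/q^(Suc i)))
         + qJacobi_coeff (a*q) b q m i * (a/q^i)
       = qJacobi_coeff (a*q) b q m i * ((N-I)*(1+a*b*N*q^2*I)*(q*I-a)/(N*I*S) + a/I)"
proof -
  define T where "T = qJacobi_term (a*q) b q m i"
  have "N \<noteq> 0" "I \<noteq> 0"
    using assms(4) by (simp_all add: N I)
  have "(1-q*I)*(1-a*q*q*I)*(1-b*q*I)*(1+q*I) = S*(1-a*q*q*I)"
    by (simp add: S mult_ac)
  then have term_Suc: "qJacobi_term (a*q) b q m (Suc i)
      = T * ((1 - I/N)*(1+a*q*b*N*q*I)*q/(S*(1-a*q*q*I)))"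
    by (simp add: T_def qJacobi_term_Suc N I)
  have factor: "(1 - a*q^(Suc i+1)) * (1 - a/q^(Suc i)) = (1-a*q*q*I) * (q*I-a)/(q*I)"
    using assms(4) by (simp add: I field_simps)
  have R: "qJacobi_term (a*q) b q m (Suc i) * ((1 - a*q^(Suc i+1)) * (1 - a/q^(Suc i)))
      = T * ((N-I)*(1+a*b*N*q^2*I)*(q*I-a)/(N*I*S))"
    unfolding term_Suc factor
    using assms(4-) \<open>N \<noteq> 0\<close> \<open>I \<noteq> 0\<close> by (simp add: field_simps power2_eq_square)
  have "qJacobi_coeff (a*q) b q m (Suc i) * ((1 - a*q^(Suc i+1)) * (1 - a/q^(Suc i)))
         + qJacobi_coeff (a*q) b q m i * (a/q^i)
      = qJacobi_norm (a*q) b q m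
        * (qJacobi_term (a*q) b q m (Suc i) * ((1 - a*q^(Suc i+1)) * (1 - a/q^(Suc i))) + T * (a/I))"
    unfolding qJacobi_coeff_def T_def I by (simp add: distrib_left mult.assoc)
  also have "\<dots> = qJacobi_norm (a*q) b q m * (T * ((N-I)*(1+a*b*N*q^2*I)*(q*I-a)/(N*I*S)) + T * (a/I))"
    unfolding R ..
  finally show ?thesis
    unfolding qJacobi_coeff_def T_def by (simp add: distrib_left mult.assoc)
qed

lemma qJacobi_coeff_shift_Suc_rhs:
  fixes a b q N I S \<Delta> :: real and m i :: nat
  assumes N: "N = q^m" and I: "I = q^i" and S: "S = (1-q*I)*(1+q*I)*(1-b*q*I)"
    and \<Delta>: "\<Delta> = 1 + a*b*q^2*N^2"
    and "q \<noteq> 0" "1 - a*q \<noteq> 0" "1 - q*N \<noteq> 0" "1 + q*N \<noteq> 0" "S \<noteq> 0" "\<Delta> \<noteq> 0"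
  shows "shift_lambda a b q m * qJacobi_coeff a b q m (Suc i)
         + shift_mu a b q m * qJacobi_coeff a b q (Suc m) (Suc i)
       = qJacobi_coeff (a*q) b q m i * (((1+a*q*N)*(1-a*b*q*N)*(N-I)*(1+a*b*N*q)*q
           - a*(1+q*N)*(1-b*q*N)*(q*N-1)*(1+a*b*N*q^2*I)) / (N*S*\<Delta>))"
    (is "?rhs = _ * ?X")
proof -
  define p T where "p = qJacobi_norm a b q m" and "T = qJacobi_term (a*q) b q m i"
  have "N \<noteq> 0"
    using assms(5) by (simp add: N)
  have term_shift: "(1 - a*q) * qJacobi_term a b q m (Suc i) = T * ((1 - I/N)*(1+a*b*N*q)*q/S)"
    using assms(6) by (simp add: T_def qJacobi_term_Suc_shift N I S mult_ac)
  have term_shift': "(1 - a*q) * qJacobi_term a b q (Suc m) (Suc i)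
      = T * ((1 - 1/(q*N))*(1+a*b*N*q*q*I)*q/S)"
    using assms(6) by (simp add: T_def qJacobi_term_Suc_Suc_shift[OF assms(5)] N I S mult_ac)
  have lambda: "shift_lambda a b q m = (1-a*q*N)*(1+a*q*N)*(1-a*b*q*N)/\<Delta>"
    by (simp add: shift_lambda_def \<Delta> N)
  have mu: "shift_mu a b q m * qJacobi_norm a b q (Suc m) = -a*(1+q*N)*(1-b*q*N)/\<Delta> * ((1-a*q*N) * p)"
    using shift_mu_mult_norm_Suc[of q m a b] assms(7,8) by (simp add: \<Delta> N p_def)
  have "(1 - a*q) * ?rhs = shift_lambda a b q m * p * ((1 - a*q) * qJacobi_term a b q m (Suc i))
      + (shift_mu a b q m * qJacobi_norm a b q (Suc m)) * ((1 - a*q) * qJacobi_term a b q (Suc m) (Suc i))"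
    by (simp add: qJacobi_coeff_def p_def algebra_simps)
  also have "\<dots> = p * T * ((1-a*q*N)*(1+a*q*N)*(1-a*b*q*N)/\<Delta> * ((1 - I/N)*(1+a*b*N*q)*q/S)
      + -a*(1+q*N)*(1-b*q*N)/\<Delta> * (1-a*q*N) * ((1 - 1/(q*N))*(1+a*b*N*q*q*I)*q/S))"
    unfolding term_shift term_shift' lambda mu by (simp add: algebra_simps)
  also have "\<dots> = (1-a*q*N) * p * T * ?X"
    using assms(5-) \<open>N \<noteq> 0\<close> by (simp add: field_simps power2_eq_square)
  also have "\<dots> = ((1 - a*q) * qJacobi_norm (a*q) b q m) * T * ?X"
    unfolding qJacobi_norm_shift by (simp add: p_def N)
  also have "\<dots> = (1 - a*q) * (qJacobi_coeff (a*q) b q m i * ?X)"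
    by (simp add: qJacobi_coeff_def T_def)
  finally show ?thesis
    using mult_left_cancel[OF assms(6)] by blast
qed

text \<open>
  The coefficient of qpoch_cos x q (Suc i) on both sides of qJacobi_ab_shift below,
  the left side being expanded by qpoch_cos_mult_factor.
\<close>

lemma qJacobi_coeff_shift_Suc:
  assumes q: "0 < q" "q < 1" and a: "\<bar>a\<bar> * q < 1" and b: "\<bar>b\<bar> * q < 1"
  shows "qJacobi_coeff (a*q) b q m (Suc i) * ((1 - a*q^(Suc i+1)) * (1 - a/q^(Suc i)))
         + qJacobi_coeff (a*q) b q m i * (a/q^i)
       = shift_lambda a b q m * qJacobi_coeff a b q m (Suc i)
         + shift_mu a b q m * qJacobi_coeff a b q (Suc m) (Suc i)"
proof -
  define N I where "N = q^m" and "I = q^i"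
  define S \<Delta> where "S = (1-q*I)*(1+q*I)*(1-b*q*I)" and "\<Delta> = 1 + a*b*q^2*N^2"
  note nz = shift_factors_neq_0[OF assms]
  have nzI: "1 - q*I \<noteq> 0" "1 + q*I \<noteq> 0" "1 - a*q*q*I \<noteq> 0" "1 - b*q*I \<noteq> 0"
    using nz(1,2,4)[of i] nz(3)[of "Suc i"] by (simp_all add: I_def mult_ac)
  have nzN: "1 - q*N \<noteq> 0" "1 + q*N \<noteq> 0" "1 - a*q \<noteq> 0" "\<Delta> \<noteq> 0"
    using nz(1,2,5)[of m] nz(3)[of 0] by (simp_all add: N_def \<Delta>_def)
  have "q \<noteq> 0" "N \<noteq> 0" "I \<noteq> 0" "S \<noteq> 0"
    using q nzI by (simp_all add: N_def I_def S_def)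
  note defs = N_def I_def S_def
  have "qJacobi_coeff (a*q) b q m (Suc i) * ((1 - a*q^(Suc i+1)) * (1 - a/q^(Suc i)))
         + qJacobi_coeff (a*q) b q m i * (a/q^i)
      = qJacobi_coeff (a*q) b q m i * ((N-I)*(1+a*b*N*q^2*I)*(q*I-a)/(N*I*S) + a/I)"
    using defs \<open>q \<noteq> 0\<close> nzI(3) \<open>S \<noteq> 0\<close> by (rule qJacobi_coeff_shift_Suc_lhs)
  also have "\<dots> = qJacobi_coeff (a*q) b q m i * (((1+a*q*N)*(1-a*b*q*N)*(N-I)*(1+a*b*N*q)*q
           - a*(1+q*N)*(1-b*q*N)*(q*N-1)*(1+a*b*N*q^2*I)) / (N*S*\<Delta>))"
    using shift_coeff_identity[OF S_def \<Delta>_def] \<open>N \<noteq> 0\<close> \<open>I \<noteq> 0\<close> \<open>S \<noteq> 0\<close> nzN(4) by simp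
  also have "\<dots> = shift_lambda a b q m * qJacobi_coeff a b q m (Suc i)
         + shift_mu a b q m * qJacobi_coeff a b q (Suc m) (Suc i)"
    using defs \<Delta>_def \<open>q \<noteq> 0\<close> nzN(3,1,2) \<open>S \<noteq> 0\<close> nzN(4)
    by (rule qJacobi_coeff_shift_Suc_rhs[symmetric])
  finally show ?thesis .
qed

lemma qJacobi_coeff_shift_0:
  assumes q: "0 < q" "q < 1" and a: "\<bar>a\<bar> * q < 1" and b: "\<bar>b\<bar> * q < 1"
  shows "qJacobi_coeff (a*q) b q m 0 * ((1 - a*q^(0+1)) * (1 - a/q^0))
       = shift_lambda a b q m * qJacobi_coeff a b q m 0 + shift_mu a b q m * qJacobi_coeff a b q (Suc m) 0"
proof -
  define N \<Delta> p where "N = q^m" and "\<Delta> = 1+a*b*q^2*N^2" and "p = qJacobi_norm a b q m"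
  note nz = shift_factors_neq_0[OF assms]
  have nzN: "1 - q*N \<noteq> 0" "1 + q*N \<noteq> 0" "\<Delta> \<noteq> 0"
    using nz(1,2,5)[of m] by (simp_all add: N_def \<Delta>_def)
  have "qJacobi_coeff (a*q) b q m 0 * ((1 - a*q^(0+1)) * (1 - a/q^0))
      = ((1 - a*q) * qJacobi_norm (a*q) b q m) * (1 - a)"
    by (simp add: qJacobi_coeff_def qJacobi_term_def)
  also have "\<dots> = (1-a*q*N) * p * ((1-a)*\<Delta>) / \<Delta>"
    unfolding qJacobi_norm_shift using nzN(3) by (simp add: N_def p_def)
  also have "(1-a)*\<Delta> = (1+a*q*N)*(1-a*b*q*N) - a*(1+q*N)*(1-b*q*N)"
    unfolding \<Delta>_def by algebra
  also have "(1-a*q*N) * p * ((1+a*q*N)*(1-a*b*q*N) - a*(1+q*N)*(1-b*q*N)) / \<Delta>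
      = shift_lambda a b q m * p + shift_mu a b q m * qJacobi_norm a b q (Suc m)"
  proof -
    have lambda: "shift_lambda a b q m = (1-a*q*N)*(1+a*q*N)*(1-a*b*q*N)/\<Delta>"
      by (simp add: shift_lambda_def \<Delta>_def N_def)
    have mu: "shift_mu a b q m * qJacobi_norm a b q (Suc m) = -a*(1+q*N)*(1-b*q*N)/\<Delta> * ((1-a*q*N) * p)"
      using shift_mu_mult_norm_Suc[of q m a b, folded N_def p_def] nzN(1,2) by (simp add: \<Delta>_def)
    show ?thesis
      unfolding lambda mu using nzN(3) by (simp add: field_simps)
  qed
  finally show ?thesis
    by (simp add: qJacobi_coeff_def qJacobi_term_def p_def)
qed

lemma qJacobi_ab_shift:
  assumes q: "0 < q" "q < 1" and a: "\<bar>a\<bar> * q < 1" and b: "\<bar>b\<bar> * q < 1"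
  shows "(1 - 2*x*of_real (a*sqrt q) + of_real (a^2*q)) * qJacobi_ab (a*q) b q m x
     = of_real (shift_lambda a b q m) * qJacobi_ab a b q m x
       + of_real (shift_mu a b q m) * qJacobi_ab a b q (Suc m) x"
proof -
  define F where "F = 1 - 2*x*of_real (a*sqrt q) + of_real (a^2*q)"
  define \<phi> where "\<phi> = qpoch_cos x q"
  define c C C' where "c = qJacobi_coeff (a*q) b q m" and "C = qJacobi_coeff a b q m"
    and "C' = qJacobi_coeff a b q (Suc m)"
  define f g where "f k = (1 - a*q^(k+1)) * (1 - a/q^k)" and "g k = a/q^k" for k
  define l u where "l = shift_lambda a b q m" and "u = shift_mu a b q m"
  have c_Suc: "c (Suc m) = 0" and C_Suc: "C (Suc m) = 0"
    using q by (simp_all add: c_def C_def qJacobi_coeff_def qJacobi_term_def qpoch_real_inverse_power_eq_0)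
  have "F * qJacobi_ab (a*q) b q m x = (\<Sum>k\<le>m. of_real (c k) * (F * \<phi> k))"
    unfolding qJacobi_ab_def c_def \<phi>_def by (simp add: sum_distrib_left mult_ac)
  also have "\<dots> = (\<Sum>k\<le>Suc m. of_real (c k * f k) * \<phi> k + of_real (c k * g k) * \<phi> (Suc k))"
    unfolding F_def \<phi>_def f_def g_def qpoch_cos_mult_factor[OF q(1)] using c_Suc
    by (simp add: algebra_simps)
  also have "\<dots> = of_real (c 0 * f 0) * \<phi> 0
      + (\<Sum>i\<le>m. of_real (c (Suc i) * f (Suc i) + c i * g i) * \<phi> (Suc i))"
    unfolding sum.distrib sum.atMost_Suc_shift[of "\<lambda>k. of_real (c k * f k) * \<phi> k"]
      sum.atMost_Suc[of "\<lambda>k. of_real (c k * g k) * \<phi> (Suc k)"]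
    using c_Suc by (simp add: sum.distrib algebra_simps)
  also have "\<dots> = of_real (l * C 0 + u * C' 0) * \<phi> 0
      + (\<Sum>i\<le>m. of_real (l * C (Suc i) + u * C' (Suc i)) * \<phi> (Suc i))"
    using qJacobi_coeff_shift_0[OF assms, of m] qJacobi_coeff_shift_Suc[OF assms, of m]
    by (simp add: c_def C_def C'_def f_def g_def l_def u_def)
  also have "\<dots> = (\<Sum>k\<le>Suc m. of_real (l * C k + u * C' k) * \<phi> k)"
    unfolding sum.atMost_Suc_shift[of "\<lambda>k. of_real (l * C k + u * C' k) * \<phi> k"] ..
  also have "\<dots> = of_real l * qJacobi_ab a b q m x + of_real u * qJacobi_ab a b q (Suc m) x"
    using C_Suc unfolding qJacobi_ab_def C_def C'_def \<phi>_def
    by (simp add: sum_distrib_left sum.distrib algebra_simps)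
  finally show ?thesis
    unfolding F_def l_def u_def .
qed

lemma shift_lambda_mu_cross_sum:
  fixes a b q :: real and m :: nat and T :: real
  assumes q: "0 < q" "q < 1" and a: "\<bar>a\<bar> * q < 1" and b: "\<bar>b\<bar> * q < 1"
  defines "T \<equiv> q^(m+1)"
  shows "shift_lambda b (a*q) q m * shift_mu a b q m + shift_mu b (a*q) q m * shift_lambda a b q (Suc m)
    = - (a+b)*(1-T)*(1+T)^2*(1-a*b*q*T)*(1-a*b*q*T^2) / ((1+a*b*T^2)*(1+a*b*q^2*T^2))"
proof -
  define D0 D1 D2 where "D0 = 1+a*b*T^2" and "D1 = 1+a*b*q*T^2" and "D2 = 1+a*b*q^2*T^2"
  have "\<bar>a*q\<bar> * q < 1"
    using a q by (simp add: abs_mult) (smt (verit) mult_left_le_one_le mult_nonneg_nonneg)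
  then have nz: "D0 \<noteq> 0" "D1 \<noteq> 0" "D2 \<noteq> 0"
    using shift_factors_neq_0(5)[OF q a b, of m] shift_factors_neq_0(5)[OF q _ b, of "a*q" m]
      shift_factors_neq_0(5)[OF q a b, of "Suc m"]
    by (simp_all add: D0_def D1_def D2_def T_def power_mult_distrib mult_ac)
  have coeffs: "shift_lambda b (a*q) q m = (1-b*T)*(1+b*T)*(1-a*b*q*T)/D1"
      "shift_mu b (a*q) q m = -b*(1-T)*(1+T)^2/D1" "shift_mu a b q m = -a*(1-T)*(1+T)^2/D0"
      "shift_lambda a b q (Suc m) = (1-a*q*T)*(1+a*q*T)*(1-a*b*q*T)/D2"
    by (simp_all add: shift_lambda_def shift_mu_def D0_def D1_def D2_def T_def power_mult_distrib
        mult_ac)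
  have poly: "a*((1-b*T)*(1+b*T))*D2 + b*((1-a*q*T)*(1+a*q*T))*D0 = (a+b)*(1-a*b*q*T^2)*D1"
    unfolding D0_def D1_def D2_def by algebra
  have "shift_lambda b (a*q) q m * shift_mu a b q m + shift_mu b (a*q) q m * shift_lambda a b q (Suc m)
      = -((1-T)*(1+T)^2*(1-a*b*q*T))
        * (a*((1-b*T)*(1+b*T))*D2 + b*((1-a*q*T)*(1+a*q*T))*D0) / (D0*D1*D2)"
    unfolding coeffs using nz by (simp add: field_simps)
  also have "\<dots> = - (a+b)*(1-T)*(1+T)^2*(1-a*b*q*T)*(1-a*b*q*T^2) / (D0*D2)"
    unfolding poly using nz by (simp add: field_simps)
  finally show ?thesis
    by (simp add: D0_def D2_def)
qed

lemma qJacobi_ab_double_shift: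
  fixes a b q :: real and m :: nat and T :: real
  assumes q: "0 < q" "q < 1" and a: "\<bar>a\<bar> * q < 1" and b: "\<bar>b\<bar> * q < 1"
  defines "T \<equiv> q^(m+1)"
  shows "(1 - 2*x*of_real (a*sqrt q) + of_real (a^2*q)) * (1 - 2*x*of_real (b*sqrt q) + of_real (b^2*q))
        * qJacobi_ab (a*q) (b*q) q m x
     = of_real ((1-a*T)*(1+a*T)*(1-b*T)*(1+b*T)*(1-a*b*T)*(1-a*b*q*T)
                / ((1+a*b*T^2)*(1+a*b*q*T^2))) * qJacobi_ab a b q m x
       + of_real (- (a+b)*(1-T)*(1+T)^2*(1-a*b*q*T)*(1-a*b*q*T^2)
                / ((1+a*b*T^2)*(1+a*b*q^2*T^2))) * qJacobi_ab a b q (m+1) x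
       + of_real (a*b*(1-T)*(1+T)^2*(1-q*T)*(1+q*T)^2
                / ((1+a*b*q*T^2)*(1+a*b*q^2*T^2))) * qJacobi_ab a b q (m+2) x"
proof -
  define Fa Fb where "Fa = 1 - 2*x*of_real (a*sqrt q) + of_real (a^2*q)"
    and "Fb = 1 - 2*x*of_real (b*sqrt q) + of_real (b^2*q)"
  define P where "P k = qJacobi_ab a b q k x" for k
  define l0 u0 l1 u1 lb ub where "l0 = shift_lambda a b q m" and "u0 = shift_mu a b q m"
    and "l1 = shift_lambda a b q (Suc m)" and "u1 = shift_mu a b q (Suc m)"
    and "lb = shift_lambda b (a*q) q m" and "ub = shift_mu b (a*q) q m"
  have "\<bar>a*q\<bar> * q < 1"
    using a q by (simp add: abs_mult) (smt (verit) mult_left_le_one_le mult_nonneg_nonneg)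
  from qJacobi_ab_shift[OF q b this, of x m]
  have shift_b: "Fb * qJacobi_ab (a*q) (b*q) q m x
      = of_real lb * qJacobi_ab (a*q) b q m x + of_real ub * qJacobi_ab (a*q) b q (Suc m) x"
    by (simp add: Fb_def lb_def ub_def qJacobi_ab_commute[of _ "a*q"])
  have shift_a: "Fa * qJacobi_ab (a*q) b q k x
      = of_real (shift_lambda a b q k) * P k + of_real (shift_mu a b q k) * P (Suc k)" for k
    using qJacobi_ab_shift[OF q a b] by (simp add: Fa_def P_def)
  have "Fa * Fb * qJacobi_ab (a*q) (b*q) q m x
      = of_real lb * (Fa * qJacobi_ab (a*q) b q m x) + of_real ub * (Fa * qJacobi_ab (a*q) b q (Suc m) x)"
    unfolding mult.assoc[of Fa] shift_b by (simp add: algebra_simps)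
  also have "\<dots> = of_real (lb*l0) * P m + of_real (lb*u0 + ub*l1) * P (Suc m)
      + of_real (ub*u1) * P (Suc (Suc m))"
    unfolding shift_a by (simp add: l0_def u0_def l1_def u1_def algebra_simps)
  finally have "Fa * Fb * qJacobi_ab (a*q) (b*q) q m x
      = of_real (lb*l0) * P m + of_real (lb*u0 + ub*l1) * P (Suc m) + of_real (ub*u1) * P (Suc (Suc m))" .
  moreover have "lb*l0 = (1-a*T)*(1+a*T)*(1-b*T)*(1+b*T)*(1-a*b*T)*(1-a*b*q*T)
      / ((1+a*b*T^2)*(1+a*b*q*T^2))"
    by (simp add: lb_def l0_def shift_lambda_def T_def power_mult_distrib mult_ac)
  moreover have "ub*u1 = a*b*(1-T)*(1+T)^2*(1-q*T)*(1+q*T)^2 / ((1+a*b*q*T^2)*(1+a*b*q^2*T^2))"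
    by (simp add: ub_def u1_def shift_mu_def T_def power_mult_distrib mult_ac)
  moreover have "lb*u0 + ub*l1 = - (a+b)*(1-T)*(1+T)^2*(1-a*b*q*T)*(1-a*b*q*T^2)
      / ((1+a*b*T^2)*(1+a*b*q^2*T^2))"
    unfolding lb_def u0_def ub_def l1_def T_def by (rule shift_lambda_mu_cross_sum[OF q a b])
  ultimately show ?thesis
    by (simp add: Fa_def Fb_def P_def)
qed

lemma powr_two_mult_of_nat:
  fixes q :: real
  assumes "0 < q"
  shows "q powr (2 * real n) = (q^n)^2"
  using assms powr_realpow[of q "n*2"] by (simp add: power_mult mult.commute)

text \<open>
  The right-hand sides are in the shape produced by qJacobi_ab_double_shift for a = A, b = -B.
\<close>

lemma contiguous_coeffs_powr:
  fixes q \<alpha> \<beta> A B T :: real and n :: nat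
  assumes "0 < q"
  defines "A \<equiv> q powr \<alpha>" and "B \<equiv> q powr \<beta>" and "T \<equiv> q^n"
  shows "(1 + q powr (\<alpha> + \<beta> + n)) * (1 + q powr (\<alpha> + \<beta> + n + 1))
           * (1 + q powr (\<alpha> + n)) * (1 + q powr (\<beta> + n)) * (1 - q powr (\<alpha> + n)) * (1 - q powr (\<beta> + n))
           / ((1 - q powr (2*n + \<alpha> + \<beta>)) * (1 - q powr (2*n + \<alpha> + \<beta> + 1)))
       = (1-A*T)*(1+A*T)*(1-(-B)*T)*(1+(-B)*T)*(1-A*(-B)*T)*(1-A*(-B)*q*T)
           / ((1+A*(-B)*T^2)*(1+A*(-B)*q*T^2))"
    and "(1 + q powr (\<alpha> + \<beta> + n + 1)) * (1 + q powr (\<alpha> + \<beta> + 2*n + 1))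
           * (1 + q ^ n)^2 * (1 - q ^ n) * (1 - q powr (\<alpha> - \<beta>))
           / ((1 - q powr (2*n + \<alpha> + \<beta>)) * (1 - q powr (2*n + \<alpha> + \<beta> + 2))) * q powr \<beta>
       = - (A + -B)*(1-T)*(1+T)^2*(1-A*(-B)*q*T)*(1-A*(-B)*q*T^2)
           / ((1+A*(-B)*T^2)*(1+A*(-B)*q^2*T^2))"
    and "(1 + q ^ n)^2 * (1 + q ^ (n + 1))^2 * (1 - q ^ n) * (1 - q ^ (n + 1))
           / ((1 - q powr (2*n + \<alpha> + \<beta> + 1)) * (1 - q powr (2*n + \<alpha> + \<beta> + 2))) * q powr (\<alpha> + \<beta>)
       = - (A*(-B)*(1-T)*(1+T)^2*(1-q*T)*(1+q*T)^2
           / ((1+A*(-B)*q*T^2)*(1+A*(-B)*q^2*T^2)))"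
  using assms(1) powr_realpow[OF assms(1), of n] powr_two_mult_of_nat[OF assms(1), of n]
    powr_gt_zero[of q \<beta>]
  by (simp_all add: A_def[symmetric] B_def[symmetric] T_def[symmetric] powr_add powr_diff
      diff_divide_eq_iff mult.assoc)
    (simp_all add: mult_ac)

theorem theorem2p1:
  fixes q \<alpha> \<beta> :: real and n :: nat and x :: complex
  assumes "0 < q" and "q < 1" and "\<alpha> > -1" and "\<beta> > -1" and "n \<ge> 1"
  shows "(1 - 2 * x * of_real (q powr (\<alpha> + 1/2)) + of_real (q powr (2*\<alpha> + 1)))
         * (1 + 2 * x * of_real (q powr (\<beta> + 1/2)) + of_real (q powr (2*\<beta> + 1)))
         * qJacobiP (\<alpha> + 1) (\<beta> + 1) q (n - 1) x
       = of_real ((1 + q powr (\<alpha> + \<beta> + n)) * (1 + q powr (\<alpha> + \<beta> + n + 1))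
                  * (1 + q powr (\<alpha> + n)) * (1 + q powr (\<beta> + n))
                  * (1 - q powr (\<alpha> + n)) * (1 - q powr (\<beta> + n))
                 / ((1 - q powr (2*n + \<alpha> + \<beta>)) * (1 - q powr (2*n + \<alpha> + \<beta> + 1))))
         * qJacobiP \<alpha> \<beta> q (n - 1) x
       + of_real ((1 + q powr (\<alpha> + \<beta> + n + 1)) * (1 + q powr (\<alpha> + \<beta> + 2*n + 1))
                  * (1 + q ^ n)^2 * (1 - q ^ n) * (1 - q powr (\<alpha> - \<beta>))
                 / ((1 - q powr (2*n + \<alpha> + \<beta>)) * (1 - q powr (2*n + \<alpha> + \<beta> + 2)))
                 * q powr \<beta>)
         * qJacobiP \<alpha> \<beta> q n x
       - of_real ((1 + q ^ n)^2 * (1 + q ^ (n + 1))^2 * (1 - q ^ n) * (1 - q ^ (n + 1))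
                 / ((1 - q powr (2*n + \<alpha> + \<beta> + 1)) * (1 - q powr (2*n + \<alpha> + \<beta> + 2)))
                 * q powr (\<alpha> + \<beta>))
         * qJacobiP \<alpha> \<beta> q (n + 1) x"
proof -
  obtain m where n: "n = Suc m"
    using \<open>n \<ge> 1\<close> by (cases n) auto
  define A B where "A = q powr \<alpha>" and "B = q powr \<beta>"
  have q: "0 < q" "q < 1"
    using assms by simp_all
  have "q powr (\<alpha>+1) < 1" "q powr (\<beta>+1) < 1"
    using assms by (simp_all add: powr01_less_one)
  then have A_lt: "\<bar>A\<bar> * q < 1" and B_lt: "\<bar>-B\<bar> * q < 1"
    using q by (simp_all add: A_def B_def powr_add)
  have P: "qJacobiP \<alpha>' \<beta>' q k x = qJacobi_ab (q powr \<alpha>') (-(q powr \<beta>')) q k x" for \<alpha>' \<beta>' k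
    using q(1) by (rule qJacobiP_eq_qJacobi_ab)
  have pw: "q powr (\<gamma> + 1/2) = q powr \<gamma> * sqrt q" "q powr (2*\<gamma> + 1) = (q powr \<gamma>)^2 * q"
    for \<gamma>
    using q(1) powr_power[of q \<gamma> 2] by (simp_all add: powr_add powr_half_sqrt)
  have P_shifted: "qJacobiP (\<alpha>+1) (\<beta>+1) q k x = qJacobi_ab (A*q) ((-B)*q) q k x" for k
    using q(1) by (simp add: P A_def B_def powr_add)
  show ?thesis
    using qJacobi_ab_double_shift[OF q A_lt B_lt, where m = m and x = x]
    unfolding contiguous_coeffs_powr[OF q(1), where \<alpha> = \<alpha> and \<beta> = \<beta> and n = n] P_shifted
    unfolding P pw
    by (simp add: n A_def[symmetric] B_def[symmetric])
qed

end
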